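(* Let $N\ge 2$ and let $r:\{0,\dots,N-1\}\to\{0,\dots,N-1\}$ be $r(k)=N-1-k$. Let $\pi$ be a permutation of $\{0,\dots,N-1\}$ with $\pi\circ r=r\circ\pi$ and $\pi(0)\in\{0,N-1\}$, and let $\rho\in\{\pi,\ r\circ\pi\}$. For a partial $N\times N$ array $A$ (some cells filled with symbols from $\{0,\dots,N-1\}$) whose first row is completely filled with a permutation of $\{0,\dots,N-1\}$, define the partial array $T(A)$ by $T(A)[\pi(i)][\rho(j)]=A[i][j]$ (cell $(\pi(i),\rho(j))$ of $T(A)$ is filled iff cell $(i,j)$ of $A$ is filled), and define $\mu(A)=\tau\circ T(A)$, where $\tau$ is the unique permutation of the symbols $\{0,\dots,N-1\}$ such that the first row of $\tau\circ T(A)$ is $0,1,\dots,N-1$ (i.e. every filled entry $x$ is replaced by $\tau(x)$). Let $H_1$ and $H_2$ be hourglass designs of order $N$ with $H_2=\mu(H_1)$. Then the number of normalized diagonal Latin squares of order $N$ that agree with $H_1$ on all filled cells of $H_1$ equals the number of normalized diagonal Latin squares of order $N$ that agree with $H_2$ on all filled cells of $H_2$.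
   Context: A diagonal Latin square of order $N$ is an $N\times N$ array with entries in $\{0,\dots,N-1\}$ such that every row, every column, the main diagonal (cells $(i,i)$) and the main antidiagonal (cells $(i,N-1-i)$) each contain every element of $\{0,\dots,N-1\}$ exactly once; rows and columns are indexed $0,\dots,N-1$. It is normalized if its first row (row $0$) is $0,1,\dots,N-1$ in this order. A hourglass design of order $N$ is a partial $N\times N$ array in which exactly the cells of row $0$, row $N-1$, the main diagonal and the main antidiagonal are filled with symbols from $\{0,\dots,N-1\}$, the first row is $0,1,\dots,N-1$, and no symbol occurs twice among the filled cells of any row, any column, the main diagonal, or the main antidiagonal. *)

theory Defs
  imports Main
begin

(* Full squares: lists of N rows, each of length N. Partial arrays: nat => nat => nat option,
   None = empty cell. Rows/columns indexed 0..N-1. *)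

definition diag_latin :: "nat \<Rightarrow> nat list list \<Rightarrow> bool" where
  "diag_latin N L \<longleftrightarrow>
     length L = N \<and> (\<forall>i<N. length (L ! i) = N) \<and>
     (\<forall>i<N. bij_betw (\<lambda>j. L ! i ! j) {0..<N} {0..<N}) \<and>
     (\<forall>j<N. bij_betw (\<lambda>i. L ! i ! j) {0..<N} {0..<N}) \<and>
     bij_betw (\<lambda>i. L ! i ! i) {0..<N} {0..<N} \<and>
     bij_betw (\<lambda>i. L ! i ! (N - 1 - i)) {0..<N} {0..<N}"

definition normalized :: "nat \<Rightarrow> nat list list \<Rightarrow> bool" where
  "normalized N L \<longleftrightarrow> (\<forall>j<N. L ! 0 ! j = j)"

type_synonym parray = "nat \<Rightarrow> nat \<Rightarrow> nat option"

definition partial_array :: "nat \<Rightarrow> parray \<Rightarrow> bool" where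
  "partial_array N A \<longleftrightarrow>
     (\<forall>i j. (N \<le> i \<or> N \<le> j) \<longrightarrow> A i j = None) \<and>
     (\<forall>i j x. A i j = Some x \<longrightarrow> x < N)"

definition hourglass :: "nat \<Rightarrow> parray \<Rightarrow> bool" where
  "hourglass N H \<longleftrightarrow>
     partial_array N H \<and>
     (\<forall>i<N. \<forall>j<N. (H i j \<noteq> None \<longleftrightarrow> (i = 0 \<or> i = N - 1 \<or> j = i \<or> j = N - 1 - i))) \<and>
     (\<forall>j<N. H 0 j = Some j) \<and>
     (\<forall>i j j' x. H i j = Some x \<and> H i j' = Some x \<longrightarrow> j = j') \<and>
     (\<forall>i i' j x. H i j = Some x \<and> H i' j = Some x \<longrightarrow> i = i') \<and>
     (\<forall>i i' x. H i i = Some x \<and> H i' i' = Some x \<longrightarrow> i = i') \<and>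
     (\<forall>i i' x. i < N \<and> i' < N \<and> H i (N - 1 - i) = Some x \<and> H i' (N - 1 - i') = Some x
        \<longrightarrow> i = i')"

definition agrees :: "nat \<Rightarrow> parray \<Rightarrow> nat list list \<Rightarrow> bool" where
  "agrees N A L \<longleftrightarrow> (\<forall>i<N. \<forall>j<N. \<forall>x. A i j = Some x \<longrightarrow> L ! i ! j = x)"

(* T(A)[pi i][rho j] = A[i][j] *)
definition Tmap :: "nat \<Rightarrow> (nat \<Rightarrow> nat) \<Rightarrow> (nat \<Rightarrow> nat) \<Rightarrow> parray \<Rightarrow> parray" where
  "Tmap N \<pi> \<rho> A p q =
     (if p < N \<and> q < N then A (the_inv_into {0..<N} \<pi> p) (the_inv_into {0..<N} \<rho> q) else None)"

definition relabel_tau :: "nat \<Rightarrow> parray \<Rightarrow> nat \<Rightarrow> nat" where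
  "relabel_tau N B x = (THE j. j < N \<and> B 0 j = Some x)"

definition mu :: "nat \<Rightarrow> (nat \<Rightarrow> nat) \<Rightarrow> (nat \<Rightarrow> nat) \<Rightarrow> parray \<Rightarrow> parray" where
  "mu N \<pi> \<rho> A i j = map_option (relabel_tau N (Tmap N \<pi> \<rho> A)) (Tmap N \<pi> \<rho> A i j)"

definition count_ndls :: "nat \<Rightarrow> parray \<Rightarrow> nat" where
  "count_ndls N H = card {L. diag_latin N L \<and> normalized N L \<and> agrees N H L}"

end

theory Submission
  imports Defs
begin

text \<open>Permuting the rows by \<pi>, the columns by \<rho> and the symbols by \<tau> maps diagonal Latin squares
  to diagonal Latin squares: rows and columns are permuted among themselves, and because \<pi>
  commutes with the reversal r, the main diagonal and antidiagonal are mapped to themselves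
  (if \<rho> = \<pi>) or swapped (if \<rho> = r \<circ> \<pi>). Since all three maps are invertible, this gives a
  bijection between the squares completing H1 and those completing H2.\<close>

definition square_of :: "nat \<Rightarrow> (nat \<Rightarrow> nat \<Rightarrow> nat) \<Rightarrow> nat list list" where
  "square_of N f = map (\<lambda>i. map (\<lambda>j. f i j) [0..<N]) [0..<N]"

lemma length_square_of: "length (square_of N f) = N" "i < N \<Longrightarrow> length (square_of N f ! i) = N"
  by (simp_all add: square_of_def)

lemma nth_square_of: "i < N \<Longrightarrow> j < N \<Longrightarrow> square_of N f ! i ! j = f i j"
  by (simp add: square_of_def)

lemma square_of_eqI:
  assumes "length L = N" "\<forall>i<N. length (L ! i) = N" "\<forall>i<N. \<forall>j<N. L ! i ! j = f i j"
  shows "square_of N f = L"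
  using assms by (auto intro!: nth_equalityI simp: length_square_of nth_square_of)

definition permute_square ::
    "nat \<Rightarrow> (nat \<Rightarrow> nat) \<Rightarrow> (nat \<Rightarrow> nat) \<Rightarrow> (nat \<Rightarrow> nat) \<Rightarrow> nat list list \<Rightarrow> nat list list" where
  "permute_square N s a b L = square_of N (\<lambda>i j. s (L ! a i ! b j))"

lemma diag_latin_nth_less:
  assumes "diag_latin N L" "i < N" "j < N"
  shows "L ! i ! j < N"
  using assms bij_betwE by (fastforce simp: diag_latin_def)

lemma permute_square_cancel:
  assumes L: "diag_latin N L"
    and "\<forall>i<N. a i < N \<and> a' (a i) = i" "\<forall>j<N. b j < N \<and> b' (b j) = j" "\<forall>x<N. s' (s x) = x"
  shows "permute_square N s' a b (permute_square N s a' b' L) = L"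
  unfolding permute_square_def
  using assms diag_latin_nth_less[OF L]
  by (intro square_of_eqI) (auto simp: diag_latin_def nth_square_of)

lemma the_inv_into_upto:
  fixes f :: "nat \<Rightarrow> nat"
  assumes "bij_betw f {0..<N} {0..<N}" "k < N"
  shows "f k < N" "the_inv_into {0..<N} f k < N"
    "f (the_inv_into {0..<N} f k) = k" "the_inv_into {0..<N} f (f k) = k"
  using assms bij_betwE[OF assms(1)] bij_betwE[OF bij_betw_the_inv_into[OF assms(1)]]
    f_the_inv_into_f_bij_betw[OF assms(1)] the_inv_into_f_f[OF bij_betw_imp_inj_on[OF assms(1)]]
  by simp_all

lemma bij_betw_rev_upto: "bij_betw (\<lambda>k. N - 1 - k) {0..<N::nat} {0..<N}"
  by (rule bij_betw_byWitness[where f' = "\<lambda>k. N - 1 - k"]) auto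

lemma the_inv_into_commute_rev:
  fixes a :: "nat \<Rightarrow> nat"
  assumes a: "bij_betw a {0..<N} {0..<N}" and ar: "\<forall>k<N. a (N - 1 - k) = N - 1 - a k"
    and k: "k < N"
  shows "the_inv_into {0..<N} a (N - 1 - k) = N - 1 - the_inv_into {0..<N} a k"
proof -
  let ?k' = "the_inv_into {0..<N} a k"
  have "a (N - 1 - ?k') = N - 1 - k"
    using ar the_inv_into_upto[OF a k] by simp
  then show ?thesis
    by (intro the_inv_into_f_eq[OF bij_betw_imp_inj_on[OF a]]) (use k in auto)
qed

lemma column_map_bij_and_inverse:
  fixes a b :: "nat \<Rightarrow> nat"
  assumes a: "bij_betw a {0..<N} {0..<N}" and ar: "\<forall>k<N. a (N - 1 - k) = N - 1 - a k"
    and b: "(\<forall>k<N. b k = a k) \<or> (\<forall>k<N. b k = N - 1 - a k)"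
  shows "bij_betw b {0..<N} {0..<N}"
    and "(\<forall>k<N. the_inv_into {0..<N} b k = the_inv_into {0..<N} a k) \<or>
         (\<forall>k<N. the_inv_into {0..<N} b k = N - 1 - the_inv_into {0..<N} a k)"
proof -
  let ?S = "{0..<N}"
  show bij: "bij_betw b ?S ?S"
    using b
  proof
    assume "\<forall>k<N. b k = a k"
    then show ?thesis using a bij_betw_cong[of ?S b a] by simp
  next
    assume "\<forall>k<N. b k = N - 1 - a k"
    then have "bij_betw b ?S ?S = bij_betw ((\<lambda>k. N - 1 - k) \<circ> a) ?S ?S"
      by (intro bij_betw_cong) simp
    then show ?thesis using bij_betw_trans[OF a bij_betw_rev_upto] by simp
  qed
  have inv_b: "the_inv_into ?S b k = i" if "i < N" "b i = k" for i k
    using that by (intro the_inv_into_f_eq[OF bij_betw_imp_inj_on[OF bij]]) auto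
  show "(\<forall>k<N. the_inv_into ?S b k = the_inv_into ?S a k) \<or>
        (\<forall>k<N. the_inv_into ?S b k = N - 1 - the_inv_into ?S a k)"
    using b
  proof
    assume ba: "\<forall>k<N. b k = a k"
    have "the_inv_into ?S b k = the_inv_into ?S a k" if "k < N" for k
      using ba the_inv_into_upto[OF a that] by (intro inv_b) simp_all
    then show ?thesis by blast
  next
    assume ba: "\<forall>k<N. b k = N - 1 - a k"
    have "the_inv_into ?S b k = N - 1 - the_inv_into ?S a k" if k: "k < N" for k
    proof (rule inv_b)
      let ?i = "the_inv_into ?S a k"
      have "?i < N" "a ?i = k" using the_inv_into_upto[OF a k] by simp_all
      moreover have "a (N - 1 - ?i) = N - 1 - k" using ar \<open>?i < N\<close> \<open>a ?i = k\<close> by simp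
      ultimately show "N - 1 - ?i < N" "b (N - 1 - ?i) = k"
        using ba k by simp_all
    qed
    then show ?thesis by blast
  qed
qed

lemma bij_betw_compose3:
  assumes "bij_betw s S S" "bij_betw g S S" "bij_betw a S S" "\<forall>x\<in>S. h x = s (g (a x))"
  shows "bij_betw h S S"
proof -
  have "bij_betw (s \<circ> (g \<circ> a)) S S"
    by (rule bij_betw_trans[OF bij_betw_trans[OF assms(3) assms(2)] assms(1)])
  then show ?thesis
    using bij_betw_cong[of S h "s \<circ> (g \<circ> a)"] assms(4) by simp
qed

lemma diag_latin_permute_square:
  fixes a b s :: "nat \<Rightarrow> nat"
  assumes L: "diag_latin N L"
    and s: "bij_betw s {0..<N} {0..<N}"
    and a: "bij_betw a {0..<N} {0..<N}" and ar: "\<forall>k<N. a (N - 1 - k) = N - 1 - a k"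
    and b: "(\<forall>k<N. b k = a k) \<or> (\<forall>k<N. b k = N - 1 - a k)"
  shows "diag_latin N (permute_square N s a b L)"
proof -
  let ?S = "{0..<N}" and ?M = "permute_square N s a b L"
  have M: "?M ! i ! j = s (L ! a i ! b j)" if "i < N" "j < N" for i j
    using that by (simp add: permute_square_def nth_square_of)
  have b_bij: "bij_betw b ?S ?S"
    by (rule column_map_bij_and_inverse(1)[OF a ar b])
  have rows: "\<forall>i<N. bij_betw (\<lambda>j. L ! i ! j) ?S ?S"
    and cols: "\<forall>j<N. bij_betw (\<lambda>i. L ! i ! j) ?S ?S"
    and diag: "bij_betw (\<lambda>i. L ! i ! i) ?S ?S"
    and antidiag: "bij_betw (\<lambda>i. L ! i ! (N - 1 - i)) ?S ?S"
    using L by (auto simp: diag_latin_def)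
  show ?thesis
    unfolding diag_latin_def
  proof (intro conjI allI impI)
    show "length ?M = N" "\<And>i. i < N \<Longrightarrow> length (?M ! i) = N"
      by (simp_all add: permute_square_def length_square_of)
  next
    fix i assume i: "i < N"
    show "bij_betw (\<lambda>j. ?M ! i ! j) ?S ?S"
      using the_inv_into_upto(1)[OF a i]
      by (intro bij_betw_compose3[OF s rows[rule_format] b_bij]) (auto simp: M i)
  next
    fix j assume j: "j < N"
    show "bij_betw (\<lambda>i. ?M ! i ! j) ?S ?S"
      using the_inv_into_upto(1)[OF b_bij j]
      by (intro bij_betw_compose3[OF s cols[rule_format] a]) (auto simp: M j)
  next
    have a_rev: "a (N - Suc i) = N - Suc (a i)" "N - Suc (N - Suc (a i)) = a i" if "i < N" for i
      using ar the_inv_into_upto(1)[OF a that] that by (auto simp flip: Suc_diff_1)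
    show "bij_betw (\<lambda>i. ?M ! i ! i) ?S ?S"
      using b
    proof
      assume "\<forall>k<N. b k = a k"
      then show ?thesis by (intro bij_betw_compose3[OF s diag a]) (simp add: M)
    next
      assume "\<forall>k<N. b k = N - 1 - a k"
      then show ?thesis by (intro bij_betw_compose3[OF s antidiag a]) (simp add: M)
    qed
    show "bij_betw (\<lambda>i. ?M ! i ! (N - 1 - i)) ?S ?S"
      using b
    proof
      assume "\<forall>k<N. b k = a k"
      then show ?thesis by (intro bij_betw_compose3[OF s antidiag a]) (auto simp: M a_rev)
    next
      assume "\<forall>k<N. b k = N - 1 - a k"
      then show ?thesis by (intro bij_betw_compose3[OF s diag a]) (auto simp: M a_rev)
    qed
  qed
qed

lemma agrees_permute_square:
  assumes H: "partial_array N H"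
    and rel: "\<forall>i<N. \<forall>j<N. H' (a i) (b j) = map_option s (H i j)"
    and L: "agrees N H' L"
    and "\<forall>i<N. a i < N" "\<forall>j<N. b j < N" "\<forall>x<N. s' (s x) = x"
  shows "agrees N H (permute_square N s' a b L)"
  unfolding agrees_def
proof (intro allI impI)
  fix i j x assume ij: "i < N" "j < N" and x: "H i j = Some x"
  have "x < N" using H x by (simp add: partial_array_def)
  have "H' (a i) (b j) = Some (s x)" using rel ij x by simp
  then have "L ! a i ! b j = s x" using L assms(4,5) ij by (simp add: agrees_def)
  then show "permute_square N s' a b L ! i ! j = x"
    using ij assms(6) \<open>x < N\<close> by (simp add: permute_square_def nth_square_of)
qed

lemma relabelling_inverse:
  fixes a b s :: "nat \<Rightarrow> nat"
  assumes a: "bij_betw a {0..<N} {0..<N}" and b: "bij_betw b {0..<N} {0..<N}"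
    and s: "bij_betw s {0..<N} {0..<N}" and H: "partial_array N H"
    and rel: "\<forall>i<N. \<forall>j<N. H' (a i) (b j) = map_option s (H i j)"
  shows "\<forall>p<N. \<forall>q<N. H (the_inv_into {0..<N} a p) (the_inv_into {0..<N} b q) =
           map_option (the_inv_into {0..<N} s) (H' p q)"
proof (intro allI impI)
  fix p q assume p: "p < N" and q: "q < N"
  let ?i = "the_inv_into {0..<N} a p" and ?j = "the_inv_into {0..<N} b q"
  have "H' p q = map_option s (H ?i ?j)"
    using rel the_inv_into_upto[OF a p] the_inv_into_upto[OF b q] by metis
  moreover have "the_inv_into {0..<N} s (s x) = x" if "H ?i ?j = Some x" for x
    using H that the_inv_into_upto(4)[OF s] by (simp add: partial_array_def)
  ultimately show "H ?i ?j = map_option (the_inv_into {0..<N} s) (H' p q)"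
    by (cases "H ?i ?j") simp_all
qed

lemma hourglass_agrees_imp_normalized:
  assumes "hourglass N H" "agrees N H L"
  shows "normalized N L"
  using assms by (auto simp: normalized_def hourglass_def agrees_def)

lemma count_ndls_relabelling_invariant:
  fixes a b s :: "nat \<Rightarrow> nat"
  assumes a: "bij_betw a {0..<N} {0..<N}" and ar: "\<forall>k<N. a (N - 1 - k) = N - 1 - a k"
    and b: "(\<forall>k<N. b k = a k) \<or> (\<forall>k<N. b k = N - 1 - a k)"
    and s: "bij_betw s {0..<N} {0..<N}"
    and H: "hourglass N H" and H': "hourglass N H'"
    and rel: "\<forall>i<N. \<forall>j<N. H' (a i) (b j) = map_option s (H i j)"
  shows "count_ndls N H = count_ndls N H'"
proof -
  let ?S = "{0..<N}"
  define a' b' s' where "a' = the_inv_into ?S a" and "b' = the_inv_into ?S b"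
    and "s' = the_inv_into ?S s"
  have b_bij: "bij_betw b ?S ?S" by (rule column_map_bij_and_inverse(1)[OF a ar b])
  have a': "bij_betw a' ?S ?S" and s': "bij_betw s' ?S ?S"
    unfolding a'_def s'_def using a s by (simp_all add: bij_betw_the_inv_into)
  have a'r: "\<forall>k<N. a' (N - 1 - k) = N - 1 - a' k"
    unfolding a'_def using the_inv_into_commute_rev[OF a ar] by blast
  have b': "(\<forall>k<N. b' k = a' k) \<or> (\<forall>k<N. b' k = N - 1 - a' k)"
    unfolding a'_def b'_def by (rule column_map_bij_and_inverse(2)[OF a ar b])
  have a_inv: "\<forall>i<N. a i < N \<and> a' (a i) = i" "\<forall>p<N. a' p < N \<and> a (a' p) = p"
    unfolding a'_def using the_inv_into_upto[OF a] by simp_all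
  have b_inv: "\<forall>j<N. b j < N \<and> b' (b j) = j" "\<forall>q<N. b' q < N \<and> b (b' q) = q"
    unfolding b'_def using the_inv_into_upto[OF b_bij] by simp_all
  have s_inv: "\<forall>x<N. s' (s x) = x" "\<forall>y<N. s (s' y) = y"
    unfolding s'_def using the_inv_into_upto[OF s] by simp_all
  have partial: "partial_array N H" "partial_array N H'"
    using H H' unfolding hourglass_def by blast+
  have rel': "\<forall>p<N. \<forall>q<N. H (a' p) (b' q) = map_option s' (H' p q)"
    unfolding a'_def b'_def s'_def by (rule relabelling_inverse[OF a b_bij s partial(1) rel])
  let ?A = "{L. diag_latin N L \<and> normalized N L \<and> agrees N H L}"
  let ?A' = "{L. diag_latin N L \<and> normalized N L \<and> agrees N H' L}"
  have "bij_betw (permute_square N s a' b') ?A ?A'"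
  proof (rule bij_betw_byWitness[where f' = "permute_square N s' a b"])
    show "\<forall>L\<in>?A. permute_square N s' a b (permute_square N s a' b' L) = L"
      using a_inv(1) b_inv(1) s_inv(1) by (intro ballI permute_square_cancel) auto
    show "\<forall>L\<in>?A'. permute_square N s a' b' (permute_square N s' a b L) = L"
      using a_inv(2) b_inv(2) s_inv(2) by (intro ballI permute_square_cancel) auto
    show "permute_square N s a' b' ` ?A \<subseteq> ?A'"
    proof clarify
      fix L assume L: "diag_latin N L" "agrees N H L"
      have "agrees N H' (permute_square N s a' b' L)"
        using agrees_permute_square[OF partial(2) rel' L(2)] a_inv(2) b_inv(2) s_inv(2) by blast
      then show "diag_latin N (permute_square N s a' b' L) \<and>
          normalized N (permute_square N s a' b' L) \<and> agrees N H' (permute_square N s a' b' L)"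
        using diag_latin_permute_square[OF L(1) s a' a'r b'] hourglass_agrees_imp_normalized[OF H']
        by blast
    qed
    show "permute_square N s' a b ` ?A' \<subseteq> ?A"
    proof clarify
      fix L assume L: "diag_latin N L" "agrees N H' L"
      have "agrees N H (permute_square N s' a b L)"
        using agrees_permute_square[OF partial(1) rel L(2)] a_inv(1) b_inv(1) s_inv(1) by blast
      then show "diag_latin N (permute_square N s' a b L) \<and>
          normalized N (permute_square N s' a b L) \<and> agrees N H (permute_square N s' a b L)"
        using diag_latin_permute_square[OF L(1) s' a ar b] hourglass_agrees_imp_normalized[OF H]
        by blast
    qed
  qed
  then show ?thesis
    unfolding count_ndls_def by (rule bij_betw_same_card)
qed

lemma mu_permuted_cell:
  assumes "bij_betw \<pi> {0..<N} {0..<N}" "bij_betw \<rho> {0..<N} {0..<N}" "i < N" "j < N"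
  shows "mu N \<pi> \<rho> A (\<pi> i) (\<rho> j) = map_option (relabel_tau N (Tmap N \<pi> \<rho> A)) (A i j)"
  using the_inv_into_upto[OF assms(1,3)] the_inv_into_upto[OF assms(2,4)]
  by (simp add: mu_def Tmap_def)

lemma bij_betw_relabel_tau:
  assumes \<pi>: "bij_betw \<pi> {0..<N} {0..<N}" and \<rho>: "bij_betw \<rho> {0..<N} {0..<N}"
    and H: "partial_array N H" and H': "hourglass N (mu N \<pi> \<rho> H)"
  shows "bij_betw (relabel_tau N (Tmap N \<pi> \<rho> H)) {0..<N} {0..<N}"
proof -
  let ?S = "{0..<N}" and ?t = "relabel_tau N (Tmap N \<pi> \<rho> H)"
  \<comment> \<open>Every symbol is hit because the first row of the image is 0, \<dots>, N-1.\<close>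
  have "j \<in> ?t ` ?S" if j: "j < N" for j
  proof -
    have "mu N \<pi> \<rho> H 0 j = Some j"
      using H' j by (simp add: hourglass_def)
    then obtain y where y: "Tmap N \<pi> \<rho> H 0 j = Some y" "?t y = j"
      by (auto simp: mu_def)
    have "y < N"
      using H y(1) by (auto simp: Tmap_def partial_array_def split: if_splits)
    then show ?thesis using y(2) by force
  qed
  then have surj: "?S \<subseteq> ?t ` ?S" by auto
  have "?t ` ?S = ?S"
    by (rule sym, rule card_seteq[OF finite_imageI[OF finite_atLeastLessThan] surj])
      (use card_image_le[of ?S ?t] in simp)
  then show ?thesis
    using finite_surj_inj[OF finite_atLeastLessThan surj] by (simp add: bij_betw_def)
qed

theorem proposition1:
  fixes N :: nat and \<pi> \<rho> :: "nat \<Rightarrow> nat" and H1 H2 :: parray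
  assumes "N \<ge> 2"
    and "bij_betw \<pi> {0..<N} {0..<N}"
    and "\<forall>k<N. \<pi> (N - 1 - k) = N - 1 - \<pi> k"
    and "\<pi> 0 = 0 \<or> \<pi> 0 = N - 1"
    and "\<rho> = \<pi> \<or> \<rho> = (\<lambda>k. N - 1 - \<pi> k)"
    and "hourglass N H1" and "hourglass N H2"
    and "H2 = mu N \<pi> \<rho> H1"
  shows "count_ndls N H1 = count_ndls N H2"
proof -
  note \<pi> = assms(2) and \<pi>_rev = assms(3) and H1 = assms(6) and H2 = assms(7,8)
  have \<rho>: "(\<forall>k<N. \<rho> k = \<pi> k) \<or> (\<forall>k<N. \<rho> k = N - 1 - \<pi> k)"
    using assms(5) by auto
  have \<rho>_bij: "bij_betw \<rho> {0..<N} {0..<N}"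
    by (rule column_map_bij_and_inverse(1)[OF \<pi> \<pi>_rev \<rho>])
  have "partial_array N H1"
    using H1 unfolding hourglass_def by blast
  then have \<tau>: "bij_betw (relabel_tau N (Tmap N \<pi> \<rho> H1)) {0..<N} {0..<N}"
    using bij_betw_relabel_tau[OF \<pi> \<rho>_bij] H2 by simp
  show ?thesis
    using count_ndls_relabelling_invariant[OF \<pi> \<pi>_rev \<rho> \<tau> H1 H2(1)]
      mu_permuted_cell[OF \<pi> \<rho>_bij] H2(2) by simp
qed

end
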